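(* Let $G$ be a finite group, $H\leq G$ of index $n$, $T=\{t_1=1,t_2,\ldots,t_n\}$ a right transversal to $H$ in $G$, and write $g=\mathsf{H}(g)\mathsf{T}(g)$ with $\mathsf{H}(g)\in H$, $\mathsf{T}(g)\in T$ for $g\in G$. Let $\chi$ be a linear character of $H$, $\chi^+$ its extension to $G$ by $0$ outside $H$, $\chi_{\mathsf{H}}(g)=\chi(\mathsf{H}(g))$, and $\rho(g)=[\chi^+(t_igt_k^{-1})]_{i,k}$ the induced monomial representation. Let $G$ act on $T\times T$ by $(s,t)\cdot g=(\mathsf{T}(sg),\mathsf{T}(tg))$; its orbits are called orbitals. An orbital $\mathcal{O}$ containing $(1,t)$ is called orientable if for all $(u,v)\in\mathcal{O}$ and all $g,k\in Hu\cap t^{-1}Hv$ one has $\chi_{\mathsf{H}}(g)^{-1}\chi_{\mathsf{H}}(tg)=\chi_{\mathsf{H}}(k)^{-1}\chi_{\mathsf{H}}(tk)$. For an orientable orbital $\mathcal{O}$ containing $(1,t)$, the orbital matrix $M_{\mathcal{O}}$ is the $n\times n$ matrix with rows and columns labelled by $T$ whose entry in position $(\mathsf{T}(g),\mathsf{T}(tg))$ equals $\chi_{\mathsf{H}}(g)^{-1}\chi_{\mathsf{H}}(tg)$ for every $g\in G$, and whose entries in positions not in $\mathcal{O}$ are $0$. Then the orbital matrices $M_{\mathcal{O}}$, as $\mathcal{O}$ ranges over the orientable orbitals, form a $\mathbb{C}$-basis of the centraliser algebra $\mathrm{C}(\rho)=\{X : X\rho(g)=\rho(g)X\ \forall g\in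 G\}$.
   Context: A right transversal $T$ to $H$ in $G$ is a set such that every $g\in G$ factorises uniquely as $g=ht$ with $h\in H$, $t\in T$. Orientability guarantees that $M_{\mathcal{O}}$ is well defined; each orbital matrix is determined up to a nonzero scalar by $\mathcal{O}$. *)

theory Defs
  imports "HOL-Algebra.Algebra" "HOL-Complex_Analysis.Complex_Analysis"
begin

definition right_transversal :: "('a, 'b) monoid_scheme \<Rightarrow> 'a set \<Rightarrow> 'a set \<Rightarrow> bool" where
  "right_transversal G H T \<longleftrightarrow> T \<subseteq> carrier G \<and>
     (\<forall>g\<in>carrier G. \<exists>!p. fst p \<in> H \<and> snd p \<in> T \<and> g = fst p \<otimes>\<^bsub>G\<^esub> snd p)"

definition Tpart :: "('a, 'b) monoid_scheme \<Rightarrow> 'a set \<Rightarrow> 'a set \<Rightarrow> 'a \<Rightarrow> 'a" where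
  "Tpart G H T g = (THE t. t \<in> T \<and> (\<exists>h\<in>H. g = h \<otimes>\<^bsub>G\<^esub> t))"

definition Hpart :: "('a, 'b) monoid_scheme \<Rightarrow> 'a set \<Rightarrow> 'a set \<Rightarrow> 'a \<Rightarrow> 'a" where
  "Hpart G H T g = (THE h. h \<in> H \<and> (\<exists>t\<in>T. g = h \<otimes>\<^bsub>G\<^esub> t))"

definition linear_character :: "('a, 'b) monoid_scheme \<Rightarrow> 'a set \<Rightarrow> ('a \<Rightarrow> complex) \<Rightarrow> bool" where
  "linear_character G H chi \<longleftrightarrow> (\<forall>h\<in>H. chi h \<noteq> 0) \<and>
     (\<forall>h\<in>H. \<forall>k\<in>H. chi (h \<otimes>\<^bsub>G\<^esub> k) = chi h * chi k)"

definition chi_plus :: "'a set \<Rightarrow> ('a \<Rightarrow> complex) \<Rightarrow> 'a \<Rightarrow> complex" where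
  "chi_plus H chi g = (if g \<in> H then chi g else 0)"

definition chi_H :: "('a, 'b) monoid_scheme \<Rightarrow> 'a set \<Rightarrow> 'a set \<Rightarrow> ('a \<Rightarrow> complex) \<Rightarrow> 'a \<Rightarrow> complex" where
  "chi_H G H T chi g = chi (Hpart G H T g)"

definition rho :: "('a, 'b) monoid_scheme \<Rightarrow> 'a set \<Rightarrow> ('a \<Rightarrow> complex) \<Rightarrow> 'a \<Rightarrow> 'a \<Rightarrow> 'a \<Rightarrow> complex" where
  "rho G H chi g s u = chi_plus H chi (s \<otimes>\<^bsub>G\<^esub> g \<otimes>\<^bsub>G\<^esub> inv\<^bsub>G\<^esub> u)"

definition orbital_act :: "('a, 'b) monoid_scheme \<Rightarrow> 'a set \<Rightarrow> 'a set \<Rightarrow> 'a \<times> 'a \<Rightarrow> 'a \<Rightarrow> 'a \<times> 'a" where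
  "orbital_act G H T p g = (Tpart G H T (fst p \<otimes>\<^bsub>G\<^esub> g), Tpart G H T (snd p \<otimes>\<^bsub>G\<^esub> g))"

definition orbitals :: "('a, 'b) monoid_scheme \<Rightarrow> 'a set \<Rightarrow> 'a set \<Rightarrow> ('a \<times> 'a) set set" where
  "orbitals G H T = {orbital_act G H T p ` carrier G | p. p \<in> T \<times> T}"

definition orientable :: "('a, 'b) monoid_scheme \<Rightarrow> 'a set \<Rightarrow> 'a set \<Rightarrow> ('a \<Rightarrow> complex)
    \<Rightarrow> ('a \<times> 'a) set \<Rightarrow> 'a \<Rightarrow> bool" where
  "orientable G H T chi Orb t \<longleftrightarrow>
     (\<forall>(u, v)\<in>Orb. \<forall>g\<in>r_coset G H u \<inter> l_coset G (inv\<^bsub>G\<^esub> t) (r_coset G H v).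
        \<forall>k\<in>r_coset G H u \<inter> l_coset G (inv\<^bsub>G\<^esub> t) (r_coset G H v).
          inverse (chi_H G H T chi g) * chi_H G H T chi (t \<otimes>\<^bsub>G\<^esub> g)
        = inverse (chi_H G H T chi k) * chi_H G H T chi (t \<otimes>\<^bsub>G\<^esub> k))"

definition orbital_matrix :: "('a, 'b) monoid_scheme \<Rightarrow> 'a set \<Rightarrow> 'a set \<Rightarrow> ('a \<Rightarrow> complex)
    \<Rightarrow> ('a \<times> 'a) set \<Rightarrow> 'a \<Rightarrow> 'a \<Rightarrow> 'a \<Rightarrow> complex" where
  "orbital_matrix G H T chi Orb t s u =
     (if (s, u) \<in> Orb then
        (let g = (SOME g. g \<in> carrier G \<and> Tpart G H T g = s \<and> Tpart G H T (t \<otimes>\<^bsub>G\<^esub> g) = u)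
         in inverse (chi_H G H T chi g) * chi_H G H T chi (t \<otimes>\<^bsub>G\<^esub> g))
      else 0)"

definition centraliser :: "('a, 'b) monoid_scheme \<Rightarrow> 'a set \<Rightarrow> 'a set \<Rightarrow> ('a \<Rightarrow> complex)
    \<Rightarrow> ('a \<Rightarrow> 'a \<Rightarrow> complex) set" where
  "centraliser G H T chi = {Xm. (\<forall>s u. (s, u) \<notin> T \<times> T \<longrightarrow> Xm s u = 0) \<and>
     (\<forall>g\<in>carrier G. \<forall>s\<in>T. \<forall>u\<in>T.
        (\<Sum>r\<in>T. Xm s r * rho G H chi g r u) = (\<Sum>r\<in>T. rho G H chi g s r * Xm r u))}"

end

theory Submission
  imports Defs
begin

(* Row s of \<rho>(g) has the single nonzero entry \<chi>(H(sg)) in column T(sg). So a matrix A commutes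
   with every \<rho>(g) iff \<chi>(H(sg)) A(T(sg), T(wg)) = A(s, w) \<chi>(H(wg)) for all s, w in T and g in G:
   up to this twist, A is constant along the orbitals. Taking s = 1 shows that on the orbital of
   (1, t) the matrix is determined by A(1, t), namely A(T(g), T(tg)) = A(1, t) \<chi>_H(g)\<inverse> \<chi>_H(tg).
   On a non-orientable orbital two representatives g, k of the same position give different
   values, forcing A(1, t) = 0; on an orientable one A agrees with A(1, t) M_O. Since the orbitals
   are disjoint and M_O(1, t) = 1, the orbital matrices are linearly independent. *)

locale right_transversal_of_subgroup = group G for G (structure) +
  fixes H T :: "'a set"
  assumes subgroup_H: "subgroup H G" and transversal: "right_transversal G H T"
begin

abbreviation "TP \<equiv> Tpart G H T"
abbreviation "HP \<equiv> Hpart G H T"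

lemma transversal_carrier [simp]: "t \<in> T \<Longrightarrow> t \<in> carrier G"
  using transversal unfolding right_transversal_def by blast

lemma subgroup_carrier [simp]: "h \<in> H \<Longrightarrow> h \<in> carrier G"
  by (rule subgroup.mem_carrier[OF subgroup_H])

lemma factorisation_unique:
  assumes "h \<in> H" "h' \<in> H" "t \<in> T" "t' \<in> T" "h \<otimes> t = h' \<otimes> t'"
  shows "h = h'" and "t = t'"
proof -
  have "\<exists>!p. fst p \<in> H \<and> snd p \<in> T \<and> h \<otimes> t = fst p \<otimes> snd p"
    using transversal assms unfolding right_transversal_def by simp
  then have "(h, t) = (h', t')"
    using assms by (metis fst_conv snd_conv)
  then show "h = h'" and "t = t'" by simp_all
qed

lemma Tpart_eqI: "h \<in> H \<Longrightarrow> t \<in> T \<Longrightarrow> g = h \<otimes> t \<Longrightarrow> TP g = t"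
  unfolding Tpart_def by (rule the_equality) (use factorisation_unique in blast)+

lemma Hpart_eqI: "h \<in> H \<Longrightarrow> t \<in> T \<Longrightarrow> g = h \<otimes> t \<Longrightarrow> HP g = h"
  unfolding Hpart_def by (rule the_equality) (use factorisation_unique in blast)+

lemma
  assumes "g \<in> carrier G"
  shows Hpart_closed: "HP g \<in> H" and Tpart_closed: "TP g \<in> T"
    and Hpart_mult_Tpart: "HP g \<otimes> TP g = g"
proof -
  obtain h t where "h \<in> H" "t \<in> T" "g = h \<otimes> t"
    using transversal assms unfolding right_transversal_def by blast
  then show "HP g \<in> H" "TP g \<in> T" "HP g \<otimes> TP g = g"
    by (simp_all add: Hpart_eqI Tpart_eqI)
qed

lemma Tpart_carrier [simp]: "g \<in> carrier G \<Longrightarrow> TP g \<in> carrier G"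
  by (simp add: Tpart_closed)

lemma Hpart_carrier [simp]: "g \<in> carrier G \<Longrightarrow> HP g \<in> carrier G"
  by (simp add: Hpart_closed)

lemma Tpart_transversal [simp]: "t \<in> T \<Longrightarrow> TP t = t"
  by (rule Tpart_eqI[of \<one>]) (simp_all add: subgroup.one_closed[OF subgroup_H])

lemma Hpart_transversal: "t \<in> T \<Longrightarrow> HP t = \<one>"
  by (rule Hpart_eqI[of \<one> t]) (simp_all add: subgroup.one_closed[OF subgroup_H])

lemma mult_inv_Tpart:
  assumes "x \<in> carrier G"
  shows "x \<otimes> inv (TP x) = HP x"
proof -
  have "x \<otimes> inv (TP x) = HP x \<otimes> TP x \<otimes> inv (TP x)"
    using Hpart_mult_Tpart[OF assms] by simp
  also have "\<dots> = HP x"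
    using assms by (simp add: m_assoc)
  finally show ?thesis .
qed

lemma Tpart_eq_iff:
  assumes "x \<in> carrier G" "u \<in> T"
  shows "TP x = u \<longleftrightarrow> x \<otimes> inv u \<in> H"
proof
  assume "TP x = u"
  then show "x \<otimes> inv u \<in> H" using assms(1) mult_inv_Tpart Hpart_closed by metis
next
  assume "x \<otimes> inv u \<in> H"
  then show "TP x = u"
    using assms by (intro Tpart_eqI[of "x \<otimes> inv u"]) (simp_all add: m_assoc)
qed

lemma mem_r_coset_iff_Tpart:
  assumes "u \<in> T"
  shows "x \<in> H #> u \<longleftrightarrow> x \<in> carrier G \<and> TP x = u"
proof (cases "x \<in> carrier G")
  case True
  then show ?thesis
    using subgroup.rcos_module[OF subgroup_H is_group _ True] Tpart_eq_iff[OF True assms] assms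
    by simp
next
  case False
  moreover have "H #> u \<subseteq> carrier G"
    using r_coset_subset_G[OF subgroup.subset[OF subgroup_H]] assms by simp
  ultimately show ?thesis by blast
qed

lemma
  assumes "x \<in> carrier G" "g \<in> carrier G"
  shows Tpart_mult_Tpart: "TP (TP x \<otimes> g) = TP (x \<otimes> g)"
    and Hpart_mult: "HP (x \<otimes> g) = HP x \<otimes> HP (TP x \<otimes> g)"
proof -
  let ?y = "TP x \<otimes> g"
  have y: "?y \<in> carrier G" using assms by simp
  have "x \<otimes> g = HP x \<otimes> TP x \<otimes> g"
    using assms by (simp add: Hpart_mult_Tpart)
  also have "\<dots> = HP x \<otimes> (HP ?y \<otimes> TP ?y)"
    using assms by (simp add: m_assoc Hpart_mult_Tpart[OF y])
  also have "\<dots> = HP x \<otimes> HP ?y \<otimes> TP ?y"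
    using assms by (simp add: m_assoc)
  finally have eq: "x \<otimes> g = HP x \<otimes> HP ?y \<otimes> TP ?y" .
  have mem: "HP x \<otimes> HP ?y \<in> H"
    using assms y by (simp add: Hpart_closed subgroup.m_closed[OF subgroup_H])
  show "TP ?y = TP (x \<otimes> g)"
    using Tpart_eqI[OF mem Tpart_closed[OF y] eq] by simp
  show "HP (x \<otimes> g) = HP x \<otimes> HP ?y"
    using Hpart_eqI[OF mem Tpart_closed[OF y] eq] .
qed

lemma Tpart_mult_eq_iff:
  assumes "r \<in> T" "u \<in> T" "g \<in> carrier G"
  shows "TP (r \<otimes> g) = u \<longleftrightarrow> TP (u \<otimes> inv g) = r"
proof -
  have inv_mem_iff: "inv y \<in> H \<longleftrightarrow> y \<in> H" if "y \<in> carrier G" for y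
    using that subgroup.m_inv_closed[OF subgroup_H] by (metis inv_inv)
  have "inv (r \<otimes> g \<otimes> inv u) = u \<otimes> inv g \<otimes> inv r"
    using assms by (simp add: inv_mult_group m_assoc)
  then show ?thesis
    using assms inv_mem_iff[of "r \<otimes> g \<otimes> inv u"] by (simp add: Tpart_eq_iff)
qed

lemma ball_transversal_reindex:
  assumes "g \<in> carrier G"
  shows "(\<forall>u\<in>T. P (TP (u \<otimes> inv g)) u) \<longleftrightarrow> (\<forall>w\<in>T. P w (TP (w \<otimes> g)))"
  using assms Tpart_closed Tpart_mult_eq_iff by (metis inv_closed m_closed transversal_carrier)

lemma double_coset_iff_Tpart:
  assumes "u \<in> T" "v \<in> T" "t \<in> carrier G"
  shows "x \<in> (H #> u) \<inter> (inv t <# (H #> v)) \<longleftrightarrow> x \<in> carrier G \<and> TP x = u \<and> TP (t \<otimes> x) = v"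
proof -
  have "x \<in> inv t <# (H #> v) \<longleftrightarrow> t \<otimes> x \<in> H #> v" if x: "x \<in> carrier G"
  proof
    assume "x \<in> inv t <# (H #> v)"
    then obtain k where "k \<in> H #> v" "x = inv t \<otimes> k"
      unfolding l_coset_def by blast
    then show "t \<otimes> x \<in> H #> v"
      using assms by (simp add: mem_r_coset_iff_Tpart flip: m_assoc)
  next
    assume "t \<otimes> x \<in> H #> v"
    moreover have "x = inv t \<otimes> (t \<otimes> x)"
      using x assms by (simp flip: m_assoc)
    ultimately show "x \<in> inv t <# (H #> v)"
      unfolding l_coset_def by blast
  qed
  then show ?thesis
    using mem_r_coset_iff_Tpart[OF assms(1), of x] mem_r_coset_iff_Tpart[OF assms(2), of "t \<otimes> x"]
      assms(3) by auto
qed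

abbreviation "act \<equiv> orbital_act G H T"

lemma orbital_act_closed: "p \<in> T \<times> T \<Longrightarrow> g \<in> carrier G \<Longrightarrow> act p g \<in> T \<times> T"
  by (auto simp: orbital_act_def Tpart_closed)

lemma orbital_act_one: "p \<in> T \<times> T \<Longrightarrow> act p \<one> = p"
  by (auto simp: orbital_act_def)

lemma orbital_act_mult:
  "p \<in> T \<times> T \<Longrightarrow> g \<in> carrier G \<Longrightarrow> k \<in> carrier G \<Longrightarrow> act (act p g) k = act p (g \<otimes> k)"
  by (auto simp: orbital_act_def Tpart_mult_Tpart m_assoc)

lemma orbit_in_orbitals: "p \<in> T \<times> T \<Longrightarrow> act p ` carrier G \<in> orbitals G H T"
  unfolding orbitals_def by blast

lemma mem_orbit_self: "p \<in> T \<times> T \<Longrightarrow> p \<in> act p ` carrier G"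
  by (metis image_eqI one_closed orbital_act_one)

lemma orbit_orbital_act:
  assumes "p \<in> T \<times> T" "g \<in> carrier G"
  shows "act (act p g) ` carrier G = act p ` carrier G"
proof -
  have "act (act p g) ` carrier G = act p ` (\<lambda>k. g \<otimes> k) ` carrier G"
    unfolding image_image using assms by (auto simp: orbital_act_mult)
  then show ?thesis using surj_const_mult assms(2) by simp
qed

lemma orbitals_subset: "Ob \<in> orbitals G H T \<Longrightarrow> Ob \<subseteq> T \<times> T"
  unfolding orbitals_def using orbital_act_closed by blast

lemma orbital_eq_orbit:
  assumes "Ob \<in> orbitals G H T" "q \<in> Ob"
  shows "Ob = act q ` carrier G"
proof -
  obtain p g where "p \<in> T \<times> T" "Ob = act p ` carrier G" "g \<in> carrier G" "q = act p g"
    using assms unfolding orbitals_def by blast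
  then show ?thesis by (simp add: orbit_orbital_act)
qed

lemma orbitals_disjoint:
  "Ob \<in> orbitals G H T \<Longrightarrow> Ob' \<in> orbitals G H T \<Longrightarrow> q \<in> Ob \<Longrightarrow> q \<in> Ob' \<Longrightarrow> Ob = Ob'"
  using orbital_eq_orbit by metis

lemma orbital_act_mem_iff:
  assumes "Ob \<in> orbitals G H T" "p \<in> T \<times> T" "g \<in> carrier G"
  shows "act p g \<in> Ob \<longleftrightarrow> p \<in> Ob"
  using assms orbital_eq_orbit[OF assms(1)] orbit_orbital_act mem_orbit_self
  by (metis image_eqI)

lemma finite_orbitals: "finite T \<Longrightarrow> finite (orbitals G H T)"
proof -
  assume "finite T"
  moreover have "orbitals G H T = (\<lambda>p. act p ` carrier G) ` (T \<times> T)"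
    unfolding orbitals_def by blast
  ultimately show ?thesis by simp
qed

lemma orbital_through_one:
  assumes "Ob \<in> orbitals G H T" "(\<one>, t) \<in> Ob"
  shows "Ob = {(TP x, TP (t \<otimes> x)) | x. x \<in> carrier G}"
  using orbital_eq_orbit[OF assms] by (auto simp: orbital_act_def)

end

locale induced_monomial_representation = right_transversal_of_subgroup +
  fixes chi :: "'a \<Rightarrow> complex"
  assumes finite_transversal: "finite T" and one_in_transversal: "\<one> \<in> T"
    and linear_character: "linear_character G H chi"
begin

lemma chi_mult: "h \<in> H \<Longrightarrow> k \<in> H \<Longrightarrow> chi (h \<otimes> k) = chi h * chi k"
  using linear_character unfolding linear_character_def by blast

lemma chi_nonzero: "h \<in> H \<Longrightarrow> chi h \<noteq> 0"
  using linear_character unfolding linear_character_def by blast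

lemma chi_one: "chi \<one> = 1"
  using chi_mult[of \<one> \<one>] chi_nonzero[of \<one>] subgroup.one_closed[OF subgroup_H] by simp

lemma chi_Hpart_mult:
  assumes "x \<in> carrier G" "g \<in> carrier G"
  shows "chi (HP (x \<otimes> g)) = chi (HP x) * chi (HP (TP x \<otimes> g))"
  unfolding Hpart_mult[OF assms] using assms by (simp add: chi_mult Hpart_closed)

lemma rho_eq:
  assumes "s \<in> T" "u \<in> T" "g \<in> carrier G"
  shows "rho G H chi g s u = (if TP (s \<otimes> g) = u then chi (HP (s \<otimes> g)) else 0)"
  using assms mult_inv_Tpart[of "s \<otimes> g"] Tpart_eq_iff[of "s \<otimes> g" u] Hpart_closed[of "s \<otimes> g"]
  by (auto simp: rho_def chi_plus_def)

lemma matrix_mult_rho: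
  assumes "u \<in> T" "g \<in> carrier G"
  shows "(\<Sum>r\<in>T. A s r * rho G H chi g r u) = A s (TP (u \<otimes> inv g)) * chi (HP (TP (u \<otimes> inv g) \<otimes> g))"
proof -
  have "(\<Sum>r\<in>T. A s r * rho G H chi g r u)
      = (\<Sum>r\<in>T. if TP (u \<otimes> inv g) = r then A s r * chi (HP (r \<otimes> g)) else 0)"
  proof (rule sum.cong)
    fix r assume "r \<in> T"
    then show "A s r * rho G H chi g r u
        = (if TP (u \<otimes> inv g) = r then A s r * chi (HP (r \<otimes> g)) else 0)"
      unfolding rho_eq[OF \<open>r \<in> T\<close> assms] Tpart_mult_eq_iff[OF \<open>r \<in> T\<close> assms] by simp
  qed simp
  then show ?thesis
    using assms finite_transversal by (simp add: Tpart_closed)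
qed

lemma rho_mult_matrix:
  assumes "s \<in> T" "g \<in> carrier G"
  shows "(\<Sum>r\<in>T. rho G H chi g s r * A r u) = chi (HP (s \<otimes> g)) * A (TP (s \<otimes> g)) u"
proof -
  have "(\<Sum>r\<in>T. rho G H chi g s r * A r u)
      = (\<Sum>r\<in>T. if r = TP (s \<otimes> g) then chi (HP (s \<otimes> g)) * A r u else 0)"
    using assms by (intro sum.cong) (auto simp: rho_eq)
  then show ?thesis
    using assms finite_transversal by (simp add: Tpart_closed)
qed

definition twisted_invariant :: "('a \<Rightarrow> 'a \<Rightarrow> complex) \<Rightarrow> bool" where
  "twisted_invariant A \<longleftrightarrow> (\<forall>g\<in>carrier G. \<forall>s\<in>T. \<forall>w\<in>T.
     chi (HP (s \<otimes> g)) * A (TP (s \<otimes> g)) (TP (w \<otimes> g)) = A s w * chi (HP (w \<otimes> g)))"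

lemma mem_centraliser_iff:
  "A \<in> centraliser G H T chi \<longleftrightarrow> (\<forall>s u. (s, u) \<notin> T \<times> T \<longrightarrow> A s u = 0) \<and> twisted_invariant A"
proof -
  have "(\<forall>u\<in>T. (\<Sum>r\<in>T. A s r * rho G H chi g r u) = (\<Sum>r\<in>T. rho G H chi g s r * A r u)) \<longleftrightarrow>
        (\<forall>w\<in>T. chi (HP (s \<otimes> g)) * A (TP (s \<otimes> g)) (TP (w \<otimes> g)) = A s w * chi (HP (w \<otimes> g)))"
    if "g \<in> carrier G" "s \<in> T" for g s
    using that ball_transversal_reindex[OF that(1),
        of "\<lambda>w u. A s w * chi (HP (w \<otimes> g)) = chi (HP (s \<otimes> g)) * A (TP (s \<otimes> g)) u"]
    by (auto simp: matrix_mult_rho rho_mult_matrix)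
  then show ?thesis
    unfolding centraliser_def twisted_invariant_def by auto
qed

lemma lincomb_in_centraliser:
  assumes "\<And>i. i \<in> I \<Longrightarrow> A i \<in> centraliser G H T chi"
  shows "(\<lambda>s u. \<Sum>i\<in>I. c i * A i s u) \<in> centraliser G H T chi"
  unfolding mem_centraliser_iff twisted_invariant_def
proof (intro conjI allI impI ballI)
  fix s u assume "(s, u) \<notin> T \<times> T"
  then show "(\<Sum>i\<in>I. c i * A i s u) = 0"
    using assms by (simp add: mem_centraliser_iff)
next
  fix g s w assume "g \<in> carrier G" "s \<in> T" "w \<in> T"
  then have "chi (HP (s \<otimes> g)) * A i (TP (s \<otimes> g)) (TP (w \<otimes> g)) = A i s w * chi (HP (w \<otimes> g))"
    if "i \<in> I" for i
    using assms[OF that] by (simp add: mem_centraliser_iff twisted_invariant_def)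
  then show "chi (HP (s \<otimes> g)) * (\<Sum>i\<in>I. c i * A i (TP (s \<otimes> g)) (TP (w \<otimes> g)))
      = (\<Sum>i\<in>I. c i * A i s w) * chi (HP (w \<otimes> g))"
    by (simp add: sum_distrib_left sum_distrib_right mult.left_commute mult.assoc)
qed

definition orbital_weight :: "'a \<Rightarrow> 'a \<Rightarrow> complex" where
  "orbital_weight t x = inverse (chi (HP x)) * chi (HP (t \<otimes> x))"

lemma orbital_weight_one: "t \<in> T \<Longrightarrow> orbital_weight t \<one> = 1"
  using Hpart_transversal one_in_transversal by (simp add: orbital_weight_def chi_one)

lemma orbital_weight_mult:
  assumes "t \<in> T" "x \<in> carrier G" "g \<in> carrier G"
  shows "chi (HP (TP x \<otimes> g)) * orbital_weight t (x \<otimes> g)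
       = orbital_weight t x * chi (HP (TP (t \<otimes> x) \<otimes> g))"
proof -
  have "t \<otimes> (x \<otimes> g) = t \<otimes> x \<otimes> g" using assms by (simp add: m_assoc)
  then have "chi (HP (t \<otimes> (x \<otimes> g))) = chi (HP (t \<otimes> x)) * chi (HP (TP (t \<otimes> x) \<otimes> g))"
    using assms chi_Hpart_mult[of "t \<otimes> x" g] by simp
  moreover have "chi (HP (x \<otimes> g)) = chi (HP x) * chi (HP (TP x \<otimes> g))"
    by (rule chi_Hpart_mult[OF assms(2,3)])
  moreover have "chi (HP (TP x \<otimes> g)) \<noteq> 0" "chi (HP x) \<noteq> 0"
    using assms by (simp_all add: chi_nonzero Hpart_closed)
  ultimately show ?thesis
    by (simp add: orbital_weight_def field_simps)
qed

lemma twisted_invariant_entry: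
  assumes "twisted_invariant A" "t \<in> T" "x \<in> carrier G"
  shows "A (TP x) (TP (t \<otimes> x)) = A \<one> t * orbital_weight t x"
proof -
  have "chi (HP x) * A (TP x) (TP (t \<otimes> x)) = A \<one> t * chi (HP (t \<otimes> x))"
    using assms one_in_transversal unfolding twisted_invariant_def by force
  moreover have "chi (HP x) \<noteq> 0"
    using assms by (simp add: chi_nonzero Hpart_closed)
  ultimately show ?thesis
    by (simp add: orbital_weight_def field_simps)
qed

lemma orientable_iff:
  assumes "Ob \<in> orbitals G H T" "(\<one>, t) \<in> Ob"
  shows "orientable G H T chi Ob t \<longleftrightarrow>
    (\<forall>x\<in>carrier G. \<forall>y\<in>carrier G. TP x = TP y \<longrightarrow> TP (t \<otimes> x) = TP (t \<otimes> y) \<longrightarrow>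
       orbital_weight t x = orbital_weight t y)"
    (is "_ \<longleftrightarrow> ?weights_agree")
proof -
  have t: "t \<in> carrier G" using orbitals_subset[OF assms(1)] assms(2) by auto
  let ?fibre = "\<lambda>u v. (H #> u) \<inter> (inv t <# (H #> v))"
  have orientable: "orientable G H T chi Ob t \<longleftrightarrow>
      (\<forall>(u, v)\<in>Ob. \<forall>x\<in>?fibre u v. \<forall>y\<in>?fibre u v. orbital_weight t x = orbital_weight t y)"
    unfolding orientable_def chi_H_def orbital_weight_def ..
  show ?thesis
  proof
    assume "orientable G H T chi Ob t"
    show ?weights_agree
    proof (intro ballI impI)
      fix x y assume xy: "x \<in> carrier G" "y \<in> carrier G" "TP x = TP y" "TP (t \<otimes> x) = TP (t \<otimes> y)"
      have "(TP x, TP (t \<otimes> x)) \<in> Ob"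
        using orbital_through_one[OF assms] xy(1) by blast
      moreover have "x \<in> ?fibre (TP x) (TP (t \<otimes> x))" "y \<in> ?fibre (TP x) (TP (t \<otimes> x))"
        using xy t by (simp_all del: Int_iff add: double_coset_iff_Tpart Tpart_closed)
      ultimately show "orbital_weight t x = orbital_weight t y"
        using \<open>orientable G H T chi Ob t\<close> orientable by fast
    qed
  next
    assume ?weights_agree
    have "orbital_weight t x = orbital_weight t y"
      if "(u, v) \<in> Ob" "x \<in> ?fibre u v" "y \<in> ?fibre u v" for u v x y
    proof -
      have "u \<in> T" "v \<in> T" using that(1) orbitals_subset[OF assms(1)] by auto
      then show ?thesis
        using that(2,3) \<open>?weights_agree\<close> t by (simp del: Int_iff add: double_coset_iff_Tpart)
    qed
    then show "orientable G H T chi Ob t"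
      unfolding orientable by blast
  qed
qed

lemma orbital_matrix_outside: "(s, u) \<notin> Ob \<Longrightarrow> orbital_matrix G H T chi Ob t s u = 0"
  by (simp add: orbital_matrix_def)

lemma orbital_matrix_eq_weight:
  assumes "Ob \<in> orbitals G H T" "(\<one>, t) \<in> Ob" "orientable G H T chi Ob t" "x \<in> carrier G"
  shows "orbital_matrix G H T chi Ob t (TP x) (TP (t \<otimes> x)) = orbital_weight t x"
proof -
  \<comment> \<open>orientability makes the entry independent of the representative picked by SOME\<close>
  let ?P = "\<lambda>g. g \<in> carrier G \<and> TP g = TP x \<and> TP (t \<otimes> g) = TP (t \<otimes> x)"
  have "?P (SOME g. ?P g)"
    by (rule someI[of ?P x]) (simp add: assms(4))
  then have "orbital_weight t (SOME g. ?P g) = orbital_weight t x"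
    using assms(3,4) orientable_iff[OF assms(1,2)] by blast
  moreover have "(TP x, TP (t \<otimes> x)) \<in> Ob"
    using orbital_through_one[OF assms(1,2)] assms(4) by blast
  ultimately show ?thesis
    by (simp add: orbital_matrix_def orbital_weight_def chi_H_def)
qed

lemma orbital_matrix_base:
  assumes "Ob \<in> orbitals G H T" "(\<one>, t) \<in> Ob" "orientable G H T chi Ob t"
  shows "orbital_matrix G H T chi Ob t \<one> t = 1"
proof -
  have "t \<in> T" using orbitals_subset[OF assms(1)] assms(2) by auto
  then show ?thesis
    using orbital_matrix_eq_weight[OF assms one_closed] one_in_transversal
    by (simp add: orbital_weight_one)
qed

lemma orbital_matrix_twisted_invariant:
  assumes "Ob \<in> orbitals G H T" "(\<one>, t) \<in> Ob" "orientable G H T chi Ob t"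
  shows "twisted_invariant (orbital_matrix G H T chi Ob t)"
  unfolding twisted_invariant_def
proof (intro ballI)
  fix g s w assume g: "g \<in> carrier G" and s: "s \<in> T" and w: "w \<in> T"
  let ?M = "orbital_matrix G H T chi Ob t"
  have t: "t \<in> T" using orbitals_subset[OF assms(1)] assms(2) by auto
  show "chi (HP (s \<otimes> g)) * ?M (TP (s \<otimes> g)) (TP (w \<otimes> g)) = ?M s w * chi (HP (w \<otimes> g))"
  proof (cases "(s, w) \<in> Ob")
    case True
    then obtain x where x: "x \<in> carrier G" "s = TP x" "w = TP (t \<otimes> x)"
      using orbital_through_one[OF assms(1,2)] by blast
    have "TP (s \<otimes> g) = TP (x \<otimes> g)" and "TP (w \<otimes> g) = TP (t \<otimes> (x \<otimes> g))"
      using x g t by (simp_all add: Tpart_mult_Tpart m_assoc)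
    then show ?thesis
      using x g t orbital_weight_mult[OF t x(1) g]
      by (simp add: orbital_matrix_eq_weight[OF assms])
  next
    case False
    then have "(TP (s \<otimes> g), TP (w \<otimes> g)) \<notin> Ob"
      using orbital_act_mem_iff[OF assms(1), of "(s, w)" g] s w g by (simp add: orbital_act_def)
    then show ?thesis
      using False by (simp add: orbital_matrix_outside)
  qed
qed

lemma orbital_matrix_in_centraliser:
  assumes "Ob \<in> orbitals G H T" "(\<one>, t) \<in> Ob" "orientable G H T chi Ob t"
  shows "orbital_matrix G H T chi Ob t \<in> centraliser G H T chi"
  unfolding mem_centraliser_iff
proof (intro conjI allI impI orbital_matrix_twisted_invariant[OF assms])
  fix s u assume "(s, u) \<notin> T \<times> T"
  then have "(s, u) \<notin> Ob" using orbitals_subset[OF assms(1)] by blast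
  then show "orbital_matrix G H T chi Ob t s u = 0" by (rule orbital_matrix_outside)
qed

lemma sum_orbital_matrices_at:
  assumes "S \<subseteq> orbitals G H T" "Ob \<in> orbitals G H T" "(s, u) \<in> Ob"
  shows "(\<Sum>Ob'\<in>S. c Ob' * orbital_matrix G H T chi Ob' (tO Ob') s u)
       = (if Ob \<in> S then c Ob * orbital_matrix G H T chi Ob (tO Ob) s u else 0)"
proof -
  have "finite S"
    using assms(1) finite_orbitals[OF finite_transversal] by (rule finite_subset)
  have "(\<Sum>Ob'\<in>S. c Ob' * orbital_matrix G H T chi Ob' (tO Ob') s u)
      = (\<Sum>Ob'\<in>S. if Ob' = Ob then c Ob' * orbital_matrix G H T chi Ob' (tO Ob') s u else 0)"
  proof (rule sum.cong)
    fix Ob' assume "Ob' \<in> S"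
    show "c Ob' * orbital_matrix G H T chi Ob' (tO Ob') s u
        = (if Ob' = Ob then c Ob' * orbital_matrix G H T chi Ob' (tO Ob') s u else 0)"
    proof (cases "Ob' = Ob")
      case False
      then have "(s, u) \<notin> Ob'"
        using orbitals_disjoint assms \<open>Ob' \<in> S\<close> by blast
      then show ?thesis using False by (simp add: orbital_matrix_outside)
    qed simp
  qed simp
  then show ?thesis
    using \<open>finite S\<close> by simp
qed

lemma non_orientable_base_entry_zero:
  assumes "twisted_invariant A" "Ob \<in> orbitals G H T" "(\<one>, t) \<in> Ob"
    and "\<not> orientable G H T chi Ob t"
  shows "A \<one> t = 0"
proof -
  have t: "t \<in> T" using orbitals_subset[OF assms(2)] assms(3) by auto
  obtain x y where xy: "x \<in> carrier G" "y \<in> carrier G" "TP x = TP y" "TP (t \<otimes> x) = TP (t \<otimes> y)"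
    and weights: "orbital_weight t x \<noteq> orbital_weight t y"
    using assms(4) orientable_iff[OF assms(2,3)] by blast
  have "A \<one> t * orbital_weight t x = A \<one> t * orbital_weight t y"
    using twisted_invariant_entry[OF assms(1) t] xy by metis
  then show ?thesis
    using weights by simp
qed

lemma orbital_matrices_independent:
  assumes "S \<subseteq> {Ob \<in> orbitals G H T. orientable G H T chi Ob (tO Ob)}"
    and "\<forall>Ob\<in>S. (\<one>, tO Ob) \<in> Ob"
    and "\<forall>s u. (\<Sum>Ob\<in>S. c Ob * orbital_matrix G H T chi Ob (tO Ob) s u) = 0"
    and "Ob \<in> S"
  shows "c Ob = 0"
proof -
  have Ob: "Ob \<in> orbitals G H T" "(\<one>, tO Ob) \<in> Ob" "orientable G H T chi Ob (tO Ob)"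
    using assms(1,2,4) by auto
  have "0 = (\<Sum>Ob'\<in>S. c Ob' * orbital_matrix G H T chi Ob' (tO Ob') \<one> (tO Ob))"
    using assms(3) by simp
  also have "\<dots> = c Ob * orbital_matrix G H T chi Ob (tO Ob) \<one> (tO Ob)"
    using sum_orbital_matrices_at[OF _ Ob(1,2)] assms(1,4) by (simp add: subset_iff)
  also have "\<dots> = c Ob"
    using orbital_matrix_base[OF Ob] by simp
  finally show ?thesis by simp
qed

lemma twisted_invariant_expansion_at:
  assumes "\<forall>Ob\<in>orbitals G H T. (\<one>, tO Ob) \<in> Ob" "twisted_invariant A" "(s, u) \<in> T \<times> T"
  defines "S \<equiv> {Ob \<in> orbitals G H T. orientable G H T chi Ob (tO Ob)}"
  shows "A s u = (\<Sum>Ob\<in>S. A \<one> (tO Ob) * orbital_matrix G H T chi Ob (tO Ob) s u)"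
proof -
  let ?M = "\<lambda>Ob. orbital_matrix G H T chi Ob (tO Ob)"
  define Ob where "Ob = act (s, u) ` carrier G"
  define t where "t = tO Ob"
  have Ob: "Ob \<in> orbitals G H T" "(s, u) \<in> Ob" "(\<one>, t) \<in> Ob"
    using assms(1,3) orbit_in_orbitals mem_orbit_self by (simp_all add: Ob_def t_def)
  then have t: "t \<in> T" using orbitals_subset by blast
  obtain x where x: "x \<in> carrier G" "s = TP x" "u = TP (t \<otimes> x)"
    using orbital_through_one[OF Ob(1,3)] Ob(2) by blast
  have A_su: "A s u = A \<one> t * orbital_weight t x"
    using twisted_invariant_entry[OF assms(2) t x(1)] x by simp
  have sum: "(\<Sum>Ob'\<in>S. A \<one> (tO Ob') * ?M Ob' s u) = (if Ob \<in> S then A \<one> t * ?M Ob s u else 0)"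
    using sum_orbital_matrices_at[OF _ Ob(1,2)] by (simp add: S_def t_def)
  show ?thesis
  proof (cases "orientable G H T chi Ob t")
    case True
    then show ?thesis
      using sum A_su orbital_matrix_eq_weight[OF Ob(1,3) True x(1)] x Ob(1)
      by (simp add: S_def t_def)
  next
    case False
    then show ?thesis
      using sum A_su non_orientable_base_entry_zero[OF assms(2) Ob(1,3)] by (simp add: S_def t_def)
  qed
qed

lemma centraliser_expansion:
  assumes "\<forall>Ob\<in>orbitals G H T. (\<one>, tO Ob) \<in> Ob" "A \<in> centraliser G H T chi"
  defines "S \<equiv> {Ob \<in> orbitals G H T. orientable G H T chi Ob (tO Ob)}"
  shows "A = (\<lambda>s u. \<Sum>Ob\<in>S. A \<one> (tO Ob) * orbital_matrix G H T chi Ob (tO Ob) s u)"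
    (is "A = ?lincomb")
proof -
  have A: "\<forall>s u. (s, u) \<notin> T \<times> T \<longrightarrow> A s u = 0" "twisted_invariant A"
    using assms(2) by (simp_all add: mem_centraliser_iff)
  have "?lincomb \<in> centraliser G H T chi"
    using assms(1) by (intro lincomb_in_centraliser) (simp add: S_def orbital_matrix_in_centraliser)
  then have "\<forall>s u. (s, u) \<notin> T \<times> T \<longrightarrow> ?lincomb s u = 0"
    by (simp add: mem_centraliser_iff)
  then show ?thesis
    using A twisted_invariant_expansion_at[OF assms(1) A(2)] unfolding S_def by fastforce
qed

lemma centraliser_eq_span_orbital_matrices:
  assumes "\<forall>Ob\<in>orbitals G H T. (\<one>, tO Ob) \<in> Ob"
  defines "S \<equiv> {Ob \<in> orbitals G H T. orientable G H T chi Ob (tO Ob)}"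
  shows "centraliser G H T chi
       = {(\<lambda>s u. \<Sum>Ob\<in>S. c Ob * orbital_matrix G H T chi Ob (tO Ob) s u) | c. True}"
proof
  show "centraliser G H T chi \<subseteq> {(\<lambda>s u. \<Sum>Ob\<in>S. c Ob * orbital_matrix G H T chi Ob (tO Ob) s u) | c. True}"
  proof
    fix A assume "A \<in> centraliser G H T chi"
    then have "A = (\<lambda>s u. \<Sum>Ob\<in>S. A \<one> (tO Ob) * orbital_matrix G H T chi Ob (tO Ob) s u)"
      unfolding S_def by (rule centraliser_expansion[OF assms(1)])
    then show "A \<in> {(\<lambda>s u. \<Sum>Ob\<in>S. c Ob * orbital_matrix G H T chi Ob (tO Ob) s u) | c. True}"
      by (intro CollectI exI[where x = "\<lambda>Ob. A \<one> (tO Ob)"]) simp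
  qed
  have "(\<lambda>s u. \<Sum>Ob\<in>S. c Ob * orbital_matrix G H T chi Ob (tO Ob) s u) \<in> centraliser G H T chi" for c
    using assms(1) by (intro lincomb_in_centraliser) (simp add: S_def orbital_matrix_in_centraliser)
  then show "{(\<lambda>s u. \<Sum>Ob\<in>S. c Ob * orbital_matrix G H T chi Ob (tO Ob) s u) | c. True}
      \<subseteq> centraliser G H T chi"
    by blast
qed

end

theorem theorem3p4:
  fixes G :: "('a, 'b) monoid_scheme" and H T :: "'a set" and chi :: "'a \<Rightarrow> complex"
    and tO :: "('a \<times> 'a) set \<Rightarrow> 'a"
  assumes "group G" and "finite (carrier G)" and "subgroup H G"
    and "right_transversal G H T" and "\<one>\<^bsub>G\<^esub> \<in> T"
    and "linear_character G H chi"
    and "\<forall>Orb\<in>orbitals G H T. (\<one>\<^bsub>G\<^esub>, tO Orb) \<in> Orb"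
  defines "S \<equiv> {Orb \<in> orbitals G H T. orientable G H T chi Orb (tO Orb)}"
  defines "M \<equiv> \<lambda>Orb. orbital_matrix G H T chi Orb (tO Orb)"
  shows "(\<forall>c :: ('a \<times> 'a) set \<Rightarrow> complex.
            (\<forall>s u. (\<Sum>Orb\<in>S. c Orb * M Orb s u) = 0) \<longrightarrow> (\<forall>Orb\<in>S. c Orb = 0))
       \<and> centraliser G H T chi = {(\<lambda>s u. \<Sum>Orb\<in>S. c Orb * M Orb s u) | c. True}"
proof -
  have "finite T"
    using assms(2,4) finite_subset unfolding right_transversal_def by blast
  then interpret induced_monomial_representation G H T chi
    using assms(1-6)
    unfolding induced_monomial_representation_def induced_monomial_representation_axioms_def
      right_transversal_of_subgroup_def right_transversal_of_subgroup_axioms_def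
    by blast
  have "S \<subseteq> {Orb \<in> orbitals G H T. orientable G H T chi Orb (tO Orb)}" "\<forall>Orb\<in>S. (\<one>\<^bsub>G\<^esub>, tO Orb) \<in> Orb"
    using assms(7) by (auto simp: S_def)
  then have "\<forall>c. (\<forall>s u. (\<Sum>Orb\<in>S. c Orb * M Orb s u) = 0) \<longrightarrow> (\<forall>Orb\<in>S. c Orb = 0)"
    unfolding M_def using orbital_matrices_independent by blast
  moreover have "centraliser G H T chi = {(\<lambda>s u. \<Sum>Orb\<in>S. c Orb * M Orb s u) | c. True}"
    unfolding S_def M_def by (rule centraliser_eq_span_orbital_matrices[OF assms(7)])
  ultimately show ?thesis ..
qed

end
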